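(* Let $\mathcal{H}$, $C$, $T$, $f_1$, $f_2$, $f$ be as in the context, satisfying (A1), (A2), (A3), assume $\Omega\neq\emptyset$, and let $\{x^k\}$ be generated by the Algorithm. Then for every $x^*\in\Omega$ the sequence of real numbers $\{\|x^k-x^*\|\}_{k\in\mathbb{N}}$ is convergent.
   Context: $\mathcal{H}$ is a real Hilbert space with inner product $\langle\cdot,\cdot\rangle$ and norm $\|\cdot\|$; $C\subseteq\mathcal{H}$ is nonempty, closed and convex; $T:C\to C$ is nonexpansive ($\|T(x)-T(y)\|\le\|x-y\|$ for all $x,y\in C$), with fixed point set $Fix(T)$. $f_1,f_2:\mathcal{H}\times\mathcal{H}\to\mathbb{R}$, $f=f_1+f_2$, and $f_i(x,x)=0$ for all $x\in C$, $i=1,2$. $\partial_2 f_i(x,y)$ denotes the subdifferential of the convex function $f_i(x,\cdot)$ at $y$. Assumptions: (A1) for each $x\in C$, $f_1(x,\cdot)$ and $f_2(x,\cdot)$ are convex and subdifferentiable on an open set containing $C$, and $f(\cdot,x)$ is weakly upper semicontinuous on $C$. (A2) $f$ is pseudo-monotone on $C$: for all $x,y\in C$, $f(x,y)\ge0\Rightarrow f(y,x)\le 0$. (A3) either $\operatorname{int}C\neq\emptyset$, or for every $x\in C$ each $f_i(x,\cdot)$ is continuous at some point of $C$. $Sol(C,f)=\{x\in C: f(x,y)\ge 0\ \forall y\in C\}$; $\Omega=Sol(C,f)\cap Fix(T)$. Algorithm: choose $x^0\in C$, $\gamma\in(0,1)$ and real numbers $\beta_k>0$ ($k\ge0$) with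 $\sum_k\beta_k=+\infty$, $\sum_k\beta_k^2<+\infty$. For $k=0,1,\dots$: take $g_1^k\in\partial_2 f_1(x^k,x^k)$, $g_2^k\in\partial_2 f_2(x^k,x^k)$; set $\eta_k=\max\{\beta_k,\|g_1^k\|,\|g_2^k\|\}$, $\lambda_k=\beta_k/\eta_k$; $y^k=\arg\min\{\lambda_k f_1(x^k,y)+\tfrac12\|y-x^k\|^2 : y\in C\}$, $z^k=\arg\min\{\lambda_k f_2(x^k,y)+\tfrac12\|y-y^k\|^2 : y\in C\}$, $x^{k+1}=\gamma z^k+(1-\gamma)T(x^k)$. *)

theory Defs
  imports "HOL-Analysis.Analysis"
begin

text \<open>Real Hilbert space: type class real_inner + complete_space.\<close>

definition subdifferential :: "('a::real_inner \<Rightarrow> real) \<Rightarrow> 'a \<Rightarrow> 'a set" where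
  "subdifferential g y = {w. \<forall>u. g u \<ge> g y + inner w (u - y)}"

definition nonexpansive_on :: "'a::real_normed_vector set \<Rightarrow> ('a \<Rightarrow> 'a) \<Rightarrow> bool" where
  "nonexpansive_on C T \<longleftrightarrow> (\<forall>x\<in>C. \<forall>y\<in>C. norm (T x - T y) \<le> norm (x - y))"

definition weakly_converges :: "(nat \<Rightarrow> 'a::real_inner) \<Rightarrow> 'a \<Rightarrow> bool" where
  "weakly_converges u v \<longleftrightarrow> (\<forall>w. (\<lambda>n. inner (u n) w) \<longlonglongrightarrow> inner v w)"

definition weakly_usc_on :: "'a::real_inner set \<Rightarrow> ('a \<Rightarrow> real) \<Rightarrow> bool" where
  "weakly_usc_on C h \<longleftrightarrow>
     (\<forall>u v. (\<forall>n. u n \<in> C) \<longrightarrow> v \<in> C \<longrightarrow> weakly_converges u v \<longrightarrow>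
        (\<forall>e>0. \<forall>\<^sub>F n in sequentially. h (u n) < h v + e))"

definition pseudo_monotone_on :: "'a set \<Rightarrow> ('a \<Rightarrow> 'a \<Rightarrow> real) \<Rightarrow> bool" where
  "pseudo_monotone_on C f \<longleftrightarrow> (\<forall>x\<in>C. \<forall>y\<in>C. f x y \<ge> 0 \<longrightarrow> f y x \<le> 0)"

definition Sol :: "'a set \<Rightarrow> ('a \<Rightarrow> 'a \<Rightarrow> real) \<Rightarrow> 'a set" where
  "Sol C f = {x\<in>C. \<forall>y\<in>C. f x y \<ge> 0}"

definition Fix :: "('a \<Rightarrow> 'a) \<Rightarrow> 'a set" where
  "Fix T = {x. T x = x}"

definition is_minimizer_on :: "('a \<Rightarrow> real) \<Rightarrow> 'a set \<Rightarrow> 'a \<Rightarrow> bool" where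
  "is_minimizer_on h C y \<longleftrightarrow> y \<in> C \<and> (\<forall>u\<in>C. h y \<le> h u)"

end

theory Submission
  imports Defs
begin

text \<open>
  Fix a solution \<open>p\<close> that is also a fixed point of \<open>T\<close>. The optimality condition of a proximal
  step gives \<open>\<parallel>p - y\<parallel>\<^sup>2 \<le> \<parallel>p - x\<parallel>\<^sup>2 - \<parallel>y - x\<parallel>\<^sup>2 + 2\<lambda>(h p - h y)\<close>; adding this for the two
  steps, pseudo-monotonicity makes \<open>f(x\<^sup>k, p) \<le> 0\<close>, and the subgradients bound the remaining
  terms \<open>-\<lambda> f\<^sub>i(x\<^sup>k, \<cdot>)\<close> by \<open>\<beta>\<^sub>k\<close> times the step lengths, because \<open>\<lambda>\<^sub>k \<parallel>g\<^sub>i\<^sup>k\<parallel> \<le> \<beta>\<^sub>k\<close>.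
  Completing squares yields \<open>\<parallel>z\<^sup>k - p\<parallel>\<^sup>2 \<le> \<parallel>x\<^sup>k - p\<parallel>\<^sup>2 + 5\<beta>\<^sub>k\<^sup>2\<close>, and averaging with the
  nonexpansive \<open>T\<close> preserves this. Since \<open>\<Sum> \<beta>\<^sub>k\<^sup>2 < \<infinity>\<close>, the sequence \<open>\<parallel>x\<^sup>k - p\<parallel>\<^sup>2\<close> is
  quasi-Fejer and hence convergent.
\<close>

lemma norm_add_square:
  fixes u v :: "'a::real_inner"
  shows "(norm (u + v))\<^sup>2 = (norm u)\<^sup>2 + 2 * inner u v + (norm v)\<^sup>2"
  by (simp add: power2_norm_eq_inner inner_add inner_commute)

lemma norm_convex_combination_square:
  fixes u v :: "'a::real_inner"
  shows "(norm (t *\<^sub>R u + (1 - t) *\<^sub>R v))\<^sup>2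
           = t * (norm u)\<^sup>2 + (1 - t) * (norm v)\<^sup>2 - t * (1 - t) * (norm (u - v))\<^sup>2"
  by (simp add: power2_norm_eq_inner inner_add inner_diff inner_commute algebra_simps)

lemma nonneg_if_add_mult_nonneg:
  fixes q c :: real
  assumes "c \<ge> 0" and small: "\<And>t. 0 < t \<Longrightarrow> t \<le> 1 \<Longrightarrow> q + t * c \<ge> 0"
  shows "q \<ge> 0"
proof (rule ccontr)
  assume "\<not> q \<ge> 0"
  define t where "t = min 1 (- q / (2 * (c + 1)))"
  have "0 < t" "t \<le> 1" using \<open>\<not> q \<ge> 0\<close> \<open>c \<ge> 0\<close> by (auto simp: t_def intro!: divide_neg_pos)
  have "t * c \<le> (- q / (2 * (c + 1))) * (c + 1)"
    using \<open>0 < t\<close> \<open>c \<ge> 0\<close> by (intro mult_mono) (auto simp: t_def)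
  also have "\<dots> = - q / 2" using \<open>c \<ge> 0\<close> by (simp add: field_simps)
  finally show False using small[OF \<open>0 < t\<close> \<open>t \<le> 1\<close>] \<open>\<not> q \<ge> 0\<close> by simp
qed

text \<open>The first-order optimality condition of a proximal step, with the directional derivative
  obtained by letting the convex combination \<open>(1 - t) y + t u\<close> tend to \<open>y\<close>.\<close>
lemma proximal_step_ineq:
  fixes C :: "'a::real_inner set"
  assumes cvx: "convex_on C h" and lam: "lam \<ge> 0" and "u \<in> C"
    and min: "is_minimizer_on (\<lambda>v. lam * h v + (1/2) * (norm (v - a))\<^sup>2) C y"
  shows "(norm (u - y))\<^sup>2 \<le> (norm (u - a))\<^sup>2 - (norm (y - a))\<^sup>2 + 2 * lam * (h u - h y)"
proof -
  have "y \<in> C" using min by (simp add: is_minimizer_on_def)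
  have key: "lam * (h u - h y) + inner (y - a) (u - y) + t * ((1/2) * (norm (u - y))\<^sup>2) \<ge> 0"
    if "0 < t" "t \<le> 1" for t
  proof -
    define w where "w = (1 - t) *\<^sub>R y + t *\<^sub>R u"
    have "w \<in> C"
      using cvx \<open>y \<in> C\<close> \<open>u \<in> C\<close> that by (simp add: w_def convex_on_def convex_alt)
    have wa: "w - a = (y - a) + t *\<^sub>R (u - y)" by (simp add: w_def algebra_simps)
    have "lam * h w \<le> lam * ((1 - t) * h y + t * h u)"
      using convex_onD[OF cvx, of t y u] that \<open>y \<in> C\<close> \<open>u \<in> C\<close> lam
      by (intro mult_left_mono) (simp_all add: w_def)
    also have "\<dots> = lam * h y + t * (lam * (h u - h y))" by (simp add: algebra_simps)
    finally have "lam * h w \<le> lam * h y + t * (lam * (h u - h y))" .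
    moreover have "lam * h y + (1/2) * (norm (y - a))\<^sup>2 \<le> lam * h w + (1/2) * (norm (w - a))\<^sup>2"
      using min \<open>w \<in> C\<close> by (simp add: is_minimizer_on_def)
    moreover have "(norm (w - a))\<^sup>2
                 = (norm (y - a))\<^sup>2 + 2 * (t * inner (y - a) (u - y)) + t * (t * (norm (u - y))\<^sup>2)"
      unfolding wa norm_add_square by (simp add: power_mult_distrib power2_eq_square)
    moreover have "t * (lam * (h u - h y) + inner (y - a) (u - y) + t * ((1/2) * (norm (u - y))\<^sup>2))
        = t * (lam * (h u - h y)) + t * inner (y - a) (u - y) + (1/2) * (t * (t * (norm (u - y))\<^sup>2))"
      by (simp add: algebra_simps)
    ultimately have "0 \<le> t * (lam * (h u - h y) + inner (y - a) (u - y) + t * ((1/2) * (norm (u - y))\<^sup>2))"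
      by linarith
    then show ?thesis using \<open>0 < t\<close> by (simp add: zero_le_mult_iff)
  qed
  have "lam * (h u - h y) + inner (y - a) (u - y) \<ge> 0"
    by (rule nonneg_if_add_mult_nonneg[OF _ key]) simp
  moreover have "(norm (u - a))\<^sup>2 = (norm (u - y))\<^sup>2 + 2 * inner (y - a) (u - y) + (norm (y - a))\<^sup>2"
    using norm_add_square[of "u - y" "y - a"] by (simp add: inner_commute)
  ultimately show ?thesis by (simp add: algebra_simps)
qed

lemma subgradient_lower_bound:
  assumes "g \<in> subdifferential h x" and "h x = 0"
  shows "h y \<ge> - (norm g * norm (y - x))"
proof -
  have "h y \<ge> h x + inner g (y - x)" using assms(1) by (simp add: subdifferential_def)
  moreover have "- inner g (y - x) \<le> norm g * norm (y - x)"
    using norm_cauchy_schwarz[of "- g" "y - x"] by simp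
  ultimately show ?thesis using assms(2) by simp
qed

lemma divide_max_mult_le:
  fixes b c m :: real
  assumes "0 < b" "b \<le> m" "c \<le> m"
  shows "b * c / m \<le> b"
  using assms by (simp add: divide_le_eq mult.commute mult_left_mono)

lemma two_proximal_steps_estimate:
  fixes C :: "'a::real_inner set"
  assumes cvx1: "convex_on C h1" and cvx2: "convex_on C h2"
    and "p \<in> C" and p_nonpos: "h1 p + h2 p \<le> 0"
    and g1: "g1 \<in> subdifferential h1 x" "h1 x = 0" "lam * norm g1 \<le> \<beta>"
    and g2: "g2 \<in> subdifferential h2 x" "h2 x = 0" "lam * norm g2 \<le> \<beta>"
    and lam: "lam \<ge> 0" and "\<beta> \<ge> 0"
    and y: "is_minimizer_on (\<lambda>v. lam * h1 v + (1/2) * (norm (v - x))\<^sup>2) C y"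
    and z: "is_minimizer_on (\<lambda>v. lam * h2 v + (1/2) * (norm (v - y))\<^sup>2) C z"
  shows "(norm (z - p))\<^sup>2 \<le> (norm (x - p))\<^sup>2 + 5 * \<beta>\<^sup>2"
proof -
  define A where "A = norm (y - x)"
  define B where "B = norm (z - y)"
  have "norm (z - x) \<le> A + B"
    using norm_triangle_ineq[of "z - y" "y - x"] by (simp add: A_def B_def)
  have bound_y: "- (lam * h1 y) \<le> \<beta> * A"
  proof -
    have "- (lam * h1 y) \<le> lam * norm g1 * A"
      using mult_left_mono[OF subgradient_lower_bound[OF g1(1,2), of y] lam] by (simp add: A_def)
    also have "\<dots> \<le> \<beta> * A" using g1(3) by (simp add: A_def mult_right_mono)
    finally show ?thesis .
  qed
  have bound_z: "- (lam * h2 z) \<le> \<beta> * (A + B)"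
  proof -
    have "- (lam * h2 z) \<le> lam * norm g2 * norm (z - x)"
      using mult_left_mono[OF subgradient_lower_bound[OF g2(1,2), of z] lam] by simp
    also have "\<dots> \<le> \<beta> * (A + B)"
      using g2(3) \<open>norm (z - x) \<le> A + B\<close> \<open>\<beta> \<ge> 0\<close>
      by (meson mult_mono norm_ge_zero order_trans)
    finally show ?thesis .
  qed
  have "lam * (h1 p + h2 p) \<le> 0" using p_nonpos lam by (simp add: mult_nonneg_nonpos)
  moreover have "(norm (p - z))\<^sup>2 \<le> (norm (p - x))\<^sup>2 - A\<^sup>2 - B\<^sup>2
                   + 2 * lam * (h1 p + h2 p) - 2 * (lam * h1 y) - 2 * (lam * h2 z)"
    using proximal_step_ineq[OF cvx1 lam \<open>p \<in> C\<close> y] proximal_step_ineq[OF cvx2 lam \<open>p \<in> C\<close> z]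
    by (simp add: A_def B_def algebra_simps)
  moreover have "0 \<le> (A - 2 * \<beta>)\<^sup>2 + (B - \<beta>)\<^sup>2" by simp
  ultimately have "(norm (p - z))\<^sup>2 \<le> (norm (p - x))\<^sup>2 + 5 * \<beta>\<^sup>2"
    using bound_y bound_z by (simp add: power2_eq_square algebra_simps)
  then show ?thesis by (simp add: norm_minus_commute)
qed

lemma averaged_step_estimate:
  fixes T :: "'a::real_inner \<Rightarrow> 'a"
  assumes "nonexpansive_on C T" "x \<in> C" "p \<in> C" "T p = p" "0 \<le> \<gamma>" "\<gamma> \<le> 1"
    and "(norm (z - p))\<^sup>2 \<le> (norm (x - p))\<^sup>2 + e" "e \<ge> 0"
  shows "(norm (\<gamma> *\<^sub>R z + (1 - \<gamma>) *\<^sub>R T x - p))\<^sup>2 \<le> (norm (x - p))\<^sup>2 + e"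
proof -
  have "norm (T x - p) \<le> norm (x - p)"
    using assms(1-4) by (metis nonexpansive_on_def)
  then have T_sq: "(norm (T x - p))\<^sup>2 \<le> (norm (x - p))\<^sup>2"
    by (simp add: power_mono)
  have "\<gamma> *\<^sub>R z + (1 - \<gamma>) *\<^sub>R T x - p = \<gamma> *\<^sub>R (z - p) + (1 - \<gamma>) *\<^sub>R (T x - p)"
    by (simp add: algebra_simps)
  then have "(norm (\<gamma> *\<^sub>R z + (1 - \<gamma>) *\<^sub>R T x - p))\<^sup>2
               \<le> \<gamma> * (norm (z - p))\<^sup>2 + (1 - \<gamma>) * (norm (T x - p))\<^sup>2"
    using norm_convex_combination_square[of \<gamma> "z - p" "T x - p"] assms(5,6) by simp
  also have "\<dots> \<le> \<gamma> * ((norm (x - p))\<^sup>2 + e) + (1 - \<gamma>) * (norm (x - p))\<^sup>2"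
    using assms(5-7) T_sq by (intro add_mono mult_left_mono) auto
  also have "\<dots> \<le> (norm (x - p))\<^sup>2 + e"
    using assms(5,6,8) by (simp add: algebra_simps mult_left_le_one_le)
  finally show ?thesis .
qed

lemma convergent_if_square_quasi_Fejer:
  fixes a e :: "nat \<Rightarrow> real"
  assumes "\<And>k. a k \<ge> 0" "\<And>k. e k \<ge> 0" "summable e"
    and step: "\<And>k. (a (Suc k))\<^sup>2 \<le> (a k)\<^sup>2 + e k"
  shows "convergent a"
proof -
  define b where "b k = (a k)\<^sup>2 - (\<Sum>i<k. e i)" for k
  have "decseq b"
  proof (rule decseq_SucI)
    show "b (Suc k) \<le> b k" for k using step[of k] by (simp add: b_def)
  qed
  moreover have "b k \<ge> - suminf e" for k
  proof -
    have "sum e {..<k} \<le> suminf e"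
      using sum_le_suminf[OF \<open>summable e\<close>, of "{..<k}"] assms(2) by simp
    then show ?thesis using zero_le_power2[of "a k"] unfolding b_def by linarith
  qed
  ultimately obtain L where "b \<longlonglongrightarrow> L" using decseq_convergent by blast
  then have "(\<lambda>k. b k + (\<Sum>i<k. e i)) \<longlonglongrightarrow> L + suminf e"
    by (intro tendsto_add summable_LIMSEQ \<open>summable e\<close>)
  then have "(\<lambda>k. sqrt ((a k)\<^sup>2)) \<longlonglongrightarrow> sqrt (L + suminf e)"
    unfolding b_def by (intro tendsto_real_sqrt) simp
  then show ?thesis using assms(1) by (auto simp: convergent_def)
qed

lemma splitting_iteration_estimate:
  fixes T :: "'a::real_inner \<Rightarrow> 'a" and g1 g2 :: 'a and \<beta> :: real
  defines "lam \<equiv> \<beta> / max \<beta> (max (norm g1) (norm g2))"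
  assumes "nonexpansive_on C T" "x \<in> C" "p \<in> C" "T p = p" "0 \<le> \<gamma>" "\<gamma> \<le> 1" "\<beta> > 0"
    and "convex_on C h1" "convex_on C h2" "h1 p + h2 p \<le> 0"
    and "g1 \<in> subdifferential h1 x" "h1 x = 0" "g2 \<in> subdifferential h2 x" "h2 x = 0"
    and "is_minimizer_on (\<lambda>v. lam * h1 v + (1/2) * (norm (v - x))\<^sup>2) C y"
    and "is_minimizer_on (\<lambda>v. lam * h2 v + (1/2) * (norm (v - y))\<^sup>2) C z"
  shows "(norm (\<gamma> *\<^sub>R z + (1 - \<gamma>) *\<^sub>R T x - p))\<^sup>2 \<le> (norm (x - p))\<^sup>2 + 5 * \<beta>\<^sup>2"
proof -
  have "lam \<ge> 0" "lam * norm g1 \<le> \<beta>" "lam * norm g2 \<le> \<beta>"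
    using \<open>\<beta> > 0\<close> unfolding lam_def by (auto intro: divide_max_mult_le)
  then have "(norm (z - p))\<^sup>2 \<le> (norm (x - p))\<^sup>2 + 5 * \<beta>\<^sup>2"
    using two_proximal_steps_estimate[OF assms(9,10,4,11,12,13) _ assms(14,15) _ _ _ assms(16,17)]
      \<open>\<beta> > 0\<close> by simp
  then show ?thesis by (rule averaged_step_estimate[OF assms(2-7)]) simp
qed

theorem proposition3p1:
  fixes C :: "'a::{real_inner, complete_space} set"
    and T :: "'a \<Rightarrow> 'a"
    and f1 f2 :: "'a \<Rightarrow> 'a \<Rightarrow> real"
    and x y z g1 g2 :: "nat \<Rightarrow> 'a"
    and \<beta> :: "nat \<Rightarrow> real" and \<gamma> :: real
  assumes C_ne: "C \<noteq> {}" and C_closed: "closed C" and C_convex: "convex C"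
    and T_maps: "T ` C \<subseteq> C" and T_nonexp: "nonexpansive_on C T"
    and f1_diag: "\<forall>u\<in>C. f1 u u = 0" and f2_diag: "\<forall>u\<in>C. f2 u u = 0"
    and A1_conv: "\<forall>u\<in>C. \<exists>U. open U \<and> C \<subseteq> U \<and>
                     convex_on U (f1 u) \<and> convex_on U (f2 u) \<and>
                     (\<forall>v\<in>U. subdifferential (f1 u) v \<noteq> {} \<and> subdifferential (f2 u) v \<noteq> {})"
    and A1_usc: "\<forall>u\<in>C. weakly_usc_on C (\<lambda>v. f1 v u + f2 v u)"
    and A2: "pseudo_monotone_on C (\<lambda>u v. f1 u v + f2 u v)"
    and A3: "interior C \<noteq> {} \<or>
             (\<forall>u\<in>C. (\<exists>v\<in>C. isCont (f1 u) v) \<and> (\<exists>v\<in>C. isCont (f2 u) v))"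
    and Omega_ne: "Sol C (\<lambda>u v. f1 u v + f2 u v) \<inter> Fix T \<inter> C \<noteq> {}"
    and x0: "x 0 \<in> C"
    and gamma: "0 < \<gamma>" "\<gamma> < 1"
    and beta_pos: "\<forall>k. \<beta> k > 0"
    and beta_div: "\<not> summable \<beta>"
    and beta_sq: "summable (\<lambda>k. (\<beta> k)\<^sup>2)"
    and g1: "\<forall>k. g1 k \<in> subdifferential (f1 (x k)) (x k)"
    and g2: "\<forall>k. g2 k \<in> subdifferential (f2 (x k)) (x k)"
    and y_def: "\<forall>k. is_minimizer_on
              (\<lambda>v. (\<beta> k / max (\<beta> k) (max (norm (g1 k)) (norm (g2 k)))) * f1 (x k) v
                    + (1/2) * (norm (v - x k))\<^sup>2) C (y k)"
    and z_def: "\<forall>k. is_minimizer_on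
              (\<lambda>v. (\<beta> k / max (\<beta> k) (max (norm (g1 k)) (norm (g2 k)))) * f2 (x k) v
                    + (1/2) * (norm (v - y k))\<^sup>2) C (z k)"
    and x_step: "\<forall>k. x (Suc k) = \<gamma> *\<^sub>R z k + (1 - \<gamma>) *\<^sub>R T (x k)"
  shows "\<forall>xs \<in> Sol C (\<lambda>u v. f1 u v + f2 u v) \<inter> Fix T.
           convergent (\<lambda>k. norm (x k - xs))"
proof
  fix p assume "p \<in> Sol C (\<lambda>u v. f1 u v + f2 u v) \<inter> Fix T"
  then have "p \<in> C" "T p = p" "\<forall>v\<in>C. f1 p v + f2 p v \<ge> 0" by (auto simp: Sol_def Fix_def)
  have xC: "x k \<in> C" for k
  proof (induction k)
    case (Suc k)
    have "z k \<in> C" using z_def by (simp add: is_minimizer_on_def)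
    with Suc show ?case using T_maps x_step gamma C_convex by (auto simp: convex_def)
  qed (rule x0)
  have "(norm (x (Suc k) - p))\<^sup>2 \<le> (norm (x k - p))\<^sup>2 + 5 * (\<beta> k)\<^sup>2" for k
  proof -
    obtain U where "C \<subseteq> U" "convex_on U (f1 (x k))" "convex_on U (f2 (x k))"
      using A1_conv xC by blast
    then have "convex_on C (f1 (x k))" "convex_on C (f2 (x k))"
      using convex_on_subset C_convex by blast+
    moreover have "f1 (x k) p + f2 (x k) p \<le> 0"
      using A2 xC \<open>p \<in> C\<close> \<open>\<forall>v\<in>C. f1 p v + f2 p v \<ge> 0\<close> by (auto simp: pseudo_monotone_on_def)
    ultimately show ?thesis
      using splitting_iteration_estimate[OF T_nonexp xC \<open>p \<in> C\<close> \<open>T p = p\<close> _ _ beta_pos[rule_format]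
          _ _ _ g1[rule_format] _ g2[rule_format] _ y_def[rule_format] z_def[rule_format]]
        gamma f1_diag f2_diag xC x_step by simp
  qed
  then show "convergent (\<lambda>k. norm (x k - p))"
    using beta_sq by (intro convergent_if_square_quasi_Fejer[where e = "\<lambda>k. 5 * (\<beta> k)\<^sup>2"]) auto
qed

end
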